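(* Let $J\ge2$, positive integers $n_1,\dots,n_J$ with $n_l\ge 2$ and $n=\sum_l n_l$, and for each $b\ge1$ let $\tilde h_b(l,l')$, $1\le l,l'\le J$, be the quantities defined below. If $1\le j\ne j'\le J$ and $\liminf_{b\to\infty}\tilde\xi_b(j,j')>0$, then $\liminf_{b\to\infty}\tilde\tau_b(j,j')>0$.
   Context: For each $b$, there are probability distributions $\mathbf F_1,\dots,\mathbf F_J$ on $\mathbb R^d$ with a partition of the coordinates into clusters $C_1,\dots,C_b$ of sizes $d_1,\dots,d_b$; $\gamma,\phi:\mathbb R^+\to\mathbb R^+$ continuous increasing with $\gamma(0)=\phi(0)=0$. For independent $\mathbf U\sim\mathbf F_l$, $\mathbf V\sim\mathbf F_{l'}$ with sub-vectors $\mathbf U_i,\mathbf V_i$ on $C_i$, $\tilde h_b(l,l')=\phi\big[b^{-1}\sum_{i=1}^b\mathrm E\gamma(d_i^{-1}\|\mathbf U_i-\mathbf V_i\|^2)\big]$ (assumed finite); note $\tilde h_b(l,l')=\tilde h_b(l',l)$. $\tilde\xi_b(j,j')=\tilde h_b(j,j')-\frac12[\tilde h_b(j,j)+\tilde h_b(j',j')]$ and $\tilde\tau_b(j,j')=\sum_{1\le l\ne j'\le J}\frac{n_l}{n-1}|\tilde h_b(j',l)-\tilde h_b(j,l)|+\frac{n_{j'}-1}{n-1}|\tilde h_b(j',j')-\tilde h_b(j,j')|$. *)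

theory Defs
  imports "HOL-Probability.Probability"
begin

text \<open>Vectors of R^d are modelled as functions nat => real; only coordinates < d matter.
  The normalised squared distance on a cluster C: (card C)^{-1} * ||u_C - v_C||^2.\<close>
definition clust_sqdist :: "nat set \<Rightarrow> (nat \<Rightarrow> real) \<Rightarrow> (nat \<Rightarrow> real) \<Rightarrow> real" where
  "clust_sqdist C u v = (\<Sum>k\<in>C. (u k - v k)^2) / real (card C)"

definition htilde ::
  "(real \<Rightarrow> real) \<Rightarrow> (real \<Rightarrow> real) \<Rightarrow> nat \<Rightarrow> (nat \<Rightarrow> nat set)
    \<Rightarrow> (nat \<Rightarrow> real) measure \<Rightarrow> (nat \<Rightarrow> real) measure \<Rightarrow> real" where
  "htilde \<phi> \<gamma> b C P Q =
     \<phi> ((1 / real b) * (\<Sum>i\<in>{1..b}.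
        \<integral>w. \<gamma> (clust_sqdist (C i) (fst w) (snd w)) \<partial>(P \<Otimes>\<^sub>M Q)))"

definition xi_t :: "(nat \<Rightarrow> nat \<Rightarrow> real) \<Rightarrow> nat \<Rightarrow> nat \<Rightarrow> real" where
  "xi_t H j j' = H j j' - (H j j + H j' j') / 2"

definition tau_t :: "nat \<Rightarrow> (nat \<Rightarrow> nat) \<Rightarrow> (nat \<Rightarrow> nat \<Rightarrow> real) \<Rightarrow> nat \<Rightarrow> nat \<Rightarrow> real" where
  "tau_t J ns H j j' =
     (let n = (\<Sum>l\<in>{1..J}. ns l) in
      (\<Sum>l\<in>{1..J} - {j'}. real (ns l) / (real n - 1) * \<bar>H j' l - H j l\<bar>)
      + (real (ns j') - 1) / (real n - 1) * \<bar>H j' j' - H j j'\<bar>)"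

end

theory Submission
  imports Defs
begin

text \<open>Since \<open>h\<close> is symmetric, the \<open>l = j\<close> term of \<open>\<tau>(j,j')\<close> and its last term together
  dominate \<open>|h(j',j) - h(j,j)| + |h(j',j') - h(j,j')| \<ge> 2 \<xi>(j,j')\<close>, up to the factor
  \<open>1/(n - 1)\<close>; as this factor does not depend on \<open>b\<close>, a positive lower limit of \<open>\<xi>\<close>
  passes to \<open>\<tau>\<close>.\<close>

lemma clust_sqdist_commute: "clust_sqdist C u v = clust_sqdist C v u"
  unfolding clust_sqdist_def by (simp add: power2_commute)

lemma integral_clust_sqdist_swap:
  fixes \<gamma> :: "real \<Rightarrow> real"
  assumes "prob_space P" "prob_space Q"
    and int: "integrable (Q \<Otimes>\<^sub>M P) (\<lambda>w. \<gamma> (clust_sqdist C (fst w) (snd w)))"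
  shows "(\<integral>w. \<gamma> (clust_sqdist C (fst w) (snd w)) \<partial>(P \<Otimes>\<^sub>M Q))
       = (\<integral>w. \<gamma> (clust_sqdist C (fst w) (snd w)) \<partial>(Q \<Otimes>\<^sub>M P))"
proof -
  interpret pair_sigma_finite Q P
    using assms by (simp add: pair_sigma_finite_def prob_space_imp_sigma_finite)
  have "(\<lambda>(x, y). \<gamma> (clust_sqdist C y x)) = (\<lambda>w. \<gamma> (clust_sqdist C (fst w) (snd w)))"
    by (auto simp: clust_sqdist_commute)
  then show ?thesis
    using integral_product_swap[OF borel_measurable_integrable[OF int]] by simp
qed

lemma htilde_commute:
  assumes "prob_space P" "prob_space Q"
    and "\<And>i. i \<in> {1..b} \<Longrightarrow>
           integrable (Q \<Otimes>\<^sub>M P) (\<lambda>w. \<gamma> (clust_sqdist (C i) (fst w) (snd w)))"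
  shows "htilde \<phi> \<gamma> b C P Q = htilde \<phi> \<gamma> b C Q P"
  unfolding htilde_def using integral_clust_sqdist_swap[OF assms(1,2) assms(3)] by simp

lemma sum_two_le_sum:
  fixes ns :: "nat \<Rightarrow> nat"
  assumes "j \<in> {1..J}" "j' \<in> {1..J}" "j \<noteq> j'"
  shows "ns j + ns j' \<le> (\<Sum>l\<in>{1..J}. ns l)"
proof -
  have "ns j + ns j' = (\<Sum>l\<in>{j,j'}. ns l)" using assms(3) by simp
  also have "\<dots> \<le> (\<Sum>l\<in>{1..J}. ns l)" by (rule sum_mono2) (use assms in auto)
  finally show ?thesis .
qed

lemma tau_t_ge_xi_t:
  fixes H :: "nat \<Rightarrow> nat \<Rightarrow> real"
  assumes ns2: "\<And>l. l \<in> {1..J} \<Longrightarrow> ns l \<ge> 2"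
    and jJ: "j \<in> {1..J}" and j'J: "j' \<in> {1..J}" and jj': "j \<noteq> j'"
    and symm: "H j j' = H j' j"
  shows "2 / (real (\<Sum>l\<in>{1..J}. ns l) - 1) * xi_t H j j' \<le> tau_t J ns H j j'"
proof -
  define n where "n = (\<Sum>l\<in>{1..J}. ns l)"
  have nj: "real (ns j) \<ge> 2" "real (ns j') \<ge> 2" using ns2 jJ j'J by auto
  have n4: "real n \<ge> 4"
    using sum_two_le_sum[OF jJ j'J jj', of ns] nj unfolding n_def by linarith
  define A where "A = \<bar>H j' j - H j j\<bar>"
  define B where "B = \<bar>H j' j' - H j j'\<bar>"
  have "1 / (real n - 1) * A \<le> real (ns j) / (real n - 1) * A"
    using nj n4 by (intro mult_right_mono divide_right_mono) (auto simp: A_def)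
  also have "\<dots> = (\<Sum>l\<in>{j}. real (ns l) / (real n - 1) * \<bar>H j' l - H j l\<bar>)"
    by (simp add: A_def)
  also have "\<dots> \<le> (\<Sum>l\<in>{1..J} - {j'}. real (ns l) / (real n - 1) * \<bar>H j' l - H j l\<bar>)"
    by (rule sum_mono2) (use jJ jj' n4 in auto)
  finally have A_le: "1 / (real n - 1) * A
      \<le> (\<Sum>l\<in>{1..J} - {j'}. real (ns l) / (real n - 1) * \<bar>H j' l - H j l\<bar>)" .
  have B_le: "1 / (real n - 1) * B \<le> (real (ns j') - 1) / (real n - 1) * B"
    using nj n4 by (intro mult_right_mono divide_right_mono) (auto simp: B_def)
  have "2 * xi_t H j j' \<le> A + B"
    unfolding A_def B_def xi_t_def
    using symm abs_ge_self[of "H j' j - H j j"] abs_ge_minus_self[of "H j' j' - H j j'"]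
    by (simp add: field_simps)
  then have "2 / (real n - 1) * xi_t H j j' \<le> 1 / (real n - 1) * (A + B)"
    using n4 by (simp add: divide_right_mono)
  also have "\<dots> \<le> tau_t J ns H j j'"
    using A_le B_le unfolding tau_t_def Let_def n_def[symmetric] B_def[symmetric]
    by (simp add: distrib_left)
  finally show ?thesis unfolding n_def .
qed

lemma liminf_pos_if_eventually_ge_mult:
  fixes f g :: "nat \<Rightarrow> real" and c :: real
  assumes "c > 0" and "eventually (\<lambda>b. c * g b \<le> f b) sequentially"
    and "liminf (\<lambda>b. ereal (g b)) > 0"
  shows "liminf (\<lambda>b. ereal (f b)) > 0"
proof -
  have "0 < ereal c * liminf (\<lambda>b. ereal (g b))"
    using assms(1,3) by (simp add: ereal_zero_less_0_iff)
  also have "\<dots> = liminf (\<lambda>b. ereal (c * g b))"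
    using Liminf_ereal_mult_left[of sequentially c "\<lambda>b. ereal (g b)"] assms(1) by simp
  also have "\<dots> \<le> liminf (\<lambda>b. ereal (f b))"
    using assms(2) by (intro Liminf_mono) (simp add: eventually_mono)
  finally show ?thesis .
qed

theorem lemmaA1:
  fixes J :: nat and ns :: "nat \<Rightarrow> nat"
    and d :: "nat \<Rightarrow> nat" and C :: "nat \<Rightarrow> nat \<Rightarrow> nat set"
    and F :: "nat \<Rightarrow> nat \<Rightarrow> (nat \<Rightarrow> real) measure"
    and \<gamma> \<phi> :: "real \<Rightarrow> real" and j j' :: nat
  assumes J2: "J \<ge> 2"
    and ns2: "\<And>l. l \<in> {1..J} \<Longrightarrow> ns l \<ge> 2"
    and F_prob: "\<And>b l. b \<ge> 1 \<Longrightarrow> l \<in> {1..J} \<Longrightarrow> prob_space (F b l)"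
    and F_sets: "\<And>b l. b \<ge> 1 \<Longrightarrow> l \<in> {1..J} \<Longrightarrow>
                   sets (F b l) = sets (Pi\<^sub>M UNIV (\<lambda>_. borel))"
    and C_nonempty: "\<And>b i. b \<ge> 1 \<Longrightarrow> i \<in> {1..b} \<Longrightarrow> C b i \<noteq> {}"
    and C_disj: "\<And>b i i'. b \<ge> 1 \<Longrightarrow> i \<in> {1..b} \<Longrightarrow> i' \<in> {1..b} \<Longrightarrow> i \<noteq> i' \<Longrightarrow>
                   C b i \<inter> C b i' = {}"
    and C_cover: "\<And>b. b \<ge> 1 \<Longrightarrow> (\<Union>i\<in>{1..b}. C b i) = {..<d b}"
    and \<gamma>_cont: "continuous_on {0..} \<gamma>" and \<gamma>_mono: "mono_on {0..} \<gamma>"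
    and \<gamma>_0: "\<gamma> 0 = 0" and \<gamma>_nonneg: "\<And>x. x \<ge> 0 \<Longrightarrow> \<gamma> x \<ge> 0"
    and \<phi>_cont: "continuous_on {0..} \<phi>" and \<phi>_mono: "mono_on {0..} \<phi>"
    and \<phi>_0: "\<phi> 0 = 0" and \<phi>_nonneg: "\<And>x. x \<ge> 0 \<Longrightarrow> \<phi> x \<ge> 0"
    and finite_E: "\<And>b l l' i. b \<ge> 1 \<Longrightarrow> l \<in> {1..J} \<Longrightarrow> l' \<in> {1..J} \<Longrightarrow> i \<in> {1..b} \<Longrightarrow>
        integrable (F b l \<Otimes>\<^sub>M F b l') (\<lambda>w. \<gamma> (clust_sqdist (C b i) (fst w) (snd w)))"
    and jJ: "j \<in> {1..J}" and j'J: "j' \<in> {1..J}" and jj': "j \<noteq> j'"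
    and xi_pos: "liminf (\<lambda>b. ereal (xi_t (\<lambda>l l'. htilde \<phi> \<gamma> b (C b) (F b l) (F b l')) j j')) > 0"
  shows "liminf (\<lambda>b. ereal (tau_t J ns (\<lambda>l l'. htilde \<phi> \<gamma> b (C b) (F b l) (F b l')) j j')) > 0"
proof (rule liminf_pos_if_eventually_ge_mult[OF _ _ xi_pos])
  have "ns j + ns j' \<le> (\<Sum>l\<in>{1..J}. ns l)" by (rule sum_two_le_sum[OF jJ j'J jj'])
  then have "real (\<Sum>l\<in>{1..J}. ns l) > 1"
    using ns2[OF jJ] ns2[OF j'J] by linarith
  then show "2 / (real (\<Sum>l\<in>{1..J}. ns l) - 1) > 0" by simp
  show "eventually (\<lambda>b. 2 / (real (\<Sum>l\<in>{1..J}. ns l) - 1)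
          * xi_t (\<lambda>l l'. htilde \<phi> \<gamma> b (C b) (F b l) (F b l')) j j'
        \<le> tau_t J ns (\<lambda>l l'. htilde \<phi> \<gamma> b (C b) (F b l) (F b l')) j j') sequentially"
  proof (rule eventually_sequentiallyI[of 1])
    fix b :: nat assume b1: "b \<ge> 1"
    have symm: "htilde \<phi> \<gamma> b (C b) (F b j) (F b j') = htilde \<phi> \<gamma> b (C b) (F b j') (F b j)"
      using F_prob[OF b1 jJ] F_prob[OF b1 j'J] finite_E[OF b1 j'J jJ] by (rule htilde_commute)
    show "2 / (real (\<Sum>l\<in>{1..J}. ns l) - 1)
          * xi_t (\<lambda>l l'. htilde \<phi> \<gamma> b (C b) (F b l) (F b l')) j j'
        \<le> tau_t J ns (\<lambda>l l'. htilde \<phi> \<gamma> b (C b) (F b l) (F b l')) j j'"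
      using ns2 jJ j'J jj' symm by (rule tau_t_ge_xi_t)
  qed
qed

end
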